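(* Let $a>0$ and $t>0$, and let $x_{\rm L}(1,t,a)\le x_{\rm R}(1,t,a)$ be the middle and largest of the three real roots of the cubic $x\{4ax^2-(8a^2+20at-t^2)x+4(a-t)^3\}$ (the left and right edges of the support of the three-parametric MP density with $r=1$). (i) If $0<t<a$, then \[ x_{\rm L}(1,t,a)=\frac{1}{8a}\{8a^2+20at-t^2-\sqrt t\,(8a+t)^{3/2}\},\qquad x_{\rm R}(1,t,a)=\frac{1}{8a}\{8a^2+20at-t^2+\sqrt t\,(8a+t)^{3/2}\}, \] and $0<x_{\rm L}(1,t,a)<x_{\rm R}(1,t,a)$. (ii) If $t\ge a$, then $x_{\rm L}(1,t,a)=0$ and \[ x_{\rm R}(1,t,a)=\frac{1}{8a}\{8a^2+20at-t^2+\sqrt t\,(8a+t)^{3/2}\}>0. \]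
   Context: For $r=1$ the cubic $S(x;r,t,a)=4ax^3-\{8a^2+4a(3r+2)t-t^2\}x^2+2[2a^3-2a^2(5r-2)t+a\{r(6r-1)+1\}t^2-(r+1)t^3]x+(r-1)^2t^2\{a^2-a(4r-2)t+t^2\}$ reduces to $x\{4ax^2-(8a^2+20at-t^2)x+4(a-t)^3\}$; the edges $x_{\rm L}(r,t,a)$, $x_{\rm R}(r,t,a)$ of the support are defined as the middle and largest real roots of $S(\cdot;r,t,a)$. *)

theory Defs
  imports Complex_Main
begin

definition S :: "real \<Rightarrow> real \<Rightarrow> real \<Rightarrow> real \<Rightarrow> real" where
  "S x r t a = 4*a*x^3 - (8*a^2 + 4*a*(3*r+2)*t - t^2) * x^2
     + 2*(2*a^3 - 2*a^2*(5*r-2)*t + a*(r*(6*r-1)+1)*t^2 - (r+1)*t^3) * x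
     + (r-1)^2 * t^2 * (a^2 - a*(4*r-2)*t + t^2)"

definition xL :: "real \<Rightarrow> real \<Rightarrow> real \<Rightarrow> real" where
  "xL r t a = (THE x2. \<exists>x1 x3. x1 \<le> x2 \<and> x2 \<le> x3 \<and>
      (\<forall>x. S x r t a = 4*a*(x-x1)*(x-x2)*(x-x3)))"

definition xR :: "real \<Rightarrow> real \<Rightarrow> real \<Rightarrow> real" where
  "xR r t a = (THE x3. \<exists>x1 x2. x1 \<le> x2 \<and> x2 \<le> x3 \<and>
      (\<forall>x. S x r t a = 4*a*(x-x1)*(x-x2)*(x-x3)))"

end

theory Submission
  imports Defs
begin

text \<open>For \<open>r = 1\<close> the cubic is \<open>x\<close> times a quadratic whose discriminant is
  \<open>t(8a + t)\<^sup>3\<close>, so its roots are the two displayed edges. Writing \<open>s = \<surd>t\<close> and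
  \<open>u = \<surd>(8a + t)\<close>, these factor as \<open>(u - 3s)\<^sup>3(u + s)/(64a)\<close> and
  \<open>(u + 3s)\<^sup>3(u - s)/(64a)\<close>: the larger is always positive, and the smaller has the
  sign of \<open>a - t\<close>, which decides whether the root \<open>0\<close> is the smallest or the middle one.
  The edges are then read off by uniqueness of the sorted roots of a factored cubic.\<close>

lemma sorted_cubic_roots_unique:
  fixes x1 x2 x3 y1 y2 y3 :: "'a::linordered_idom"
  assumes sorted: "x1 \<le> x2" "x2 \<le> x3" "y1 \<le> y2" "y2 \<le> y3"
    and eq: "\<And>x. (x-x1)*(x-x2)*(x-x3) = (x-y1)*(x-y2)*(x-y3)"
  shows "x1 = y1 \<and> x2 = y2 \<and> x3 = y3"
proof -
  have "y1 \<le> x1" using eq[of x1] sorted by auto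
  moreover have "x1 \<le> y1" using eq[of y1] sorted by auto
  moreover have "x3 \<le> y3" using eq[of x3] sorted by auto
  moreover have "y3 \<le> x3" using eq[of y3] sorted by auto
  ultimately have outer: "x1 = y1" "x3 = y3" by auto
  define z where "z = x1 - 1"
  have "((z-x1)*(z-x3)) * (z-x2) = ((z-x1)*(z-x3)) * (z-y2)"
    using eq[of z] outer by (simp add: algebra_simps)
  moreover have "(z-x1)*(z-x3) \<noteq> 0" using sorted unfolding z_def by auto
  ultimately have "x2 = y2" by simp
  with outer show ?thesis by simp
qed

lemma xL_xR_of_factorization:
  assumes "a \<noteq> 0" and sorted: "x1 \<le> x2" "x2 \<le> x3"
    and factor: "\<And>x. S x r t a = 4*a*(x-x1)*(x-x2)*(x-x3)"
  shows "xL r t a = x2" and "xR r t a = x3"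
proof -
  have unique: "y1 = x1 \<and> y2 = x2 \<and> y3 = x3"
    if "y1 \<le> y2" "y2 \<le> y3" "\<forall>x. S x r t a = 4*a*(x-y1)*(x-y2)*(x-y3)" for y1 y2 y3
    using sorted_cubic_roots_unique[OF that(1,2) sorted] that(3) factor \<open>a \<noteq> 0\<close>
    by (simp add: mult.assoc)
  show "xL r t a = x2" unfolding xL_def
    by (rule the_equality) (use sorted factor unique in blast)+
  show "xR r t a = x3" unfolding xR_def
    by (rule the_equality) (use sorted factor unique in blast)+
qed

lemma quadratic_factorization:
  fixes A B C D x :: "'a::field_char_0"
  assumes "A \<noteq> 0" and "D^2 = B^2 - 4*A*C"
  shows "A*x^2 - B*x + C = A * (x - (B - D) / (2*A)) * (x - (B + D) / (2*A))"
proof -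
  have C: "C = (B^2 - D^2) / (4*A)" using assms by (simp add: field_simps)
  show ?thesis using assms(1) unfolding C by (simp add: field_simps power2_eq_square)
qed

lemma S_1_factorization:
  fixes a t D :: real
  assumes "a \<noteq> 0" and "D^2 = t * (8*a + t)^3"
  shows "S x 1 t a = 4*a*x * (x - (8*a^2 + 20*a*t - t^2 - D) / (8*a))
                            * (x - (8*a^2 + 20*a*t - t^2 + D) / (8*a))"
proof -
  define B where "B = 8*a^2 + 20*a*t - t^2"
  have S_1: "S x 1 t a = x * (4*a*x^2 - B*x + 4*(a-t)^3)"
    unfolding S_def B_def by (simp add: algebra_simps power2_eq_square power3_eq_cube)
  have "D^2 = B^2 - 4*(4*a)*(4*(a-t)^3)"
    unfolding assms(2) B_def by (simp add: algebra_simps power2_eq_square power3_eq_cube)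
  from quadratic_factorization[of "4*a", OF _ this] assms(1)
  have "4*a*x^2 - B*x + 4*(a-t)^3 = 4*a * (x - (B - D) / (8*a)) * (x - (B + D) / (8*a))"
    by simp
  then show ?thesis unfolding S_1 B_def by (simp add: ac_simps)
qed

lemma powr_three_halves:
  fixes x :: real
  assumes "0 \<le> x"
  shows "x powr (3/2) = sqrt x ^ 3"
proof (cases "x = 0")
  case False
  then have "(x powr (1/2)) ^ 3 = x powr (3/2)" by (simp add: powr_power)
  with assms show ?thesis by (simp add: powr_half_sqrt)
qed simp

definition lower_edge :: "real \<Rightarrow> real \<Rightarrow> real" where
  "lower_edge t a = (8*a^2 + 20*a*t - t^2 - sqrt t * (8*a+t) powr (3/2)) / (8*a)"

definition upper_edge :: "real \<Rightarrow> real \<Rightarrow> real" where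
  "upper_edge t a = (8*a^2 + 20*a*t - t^2 + sqrt t * (8*a+t) powr (3/2)) / (8*a)"

lemma S_1_factorization_edges:
  assumes "a > 0" and "t \<ge> 0"
  shows "S x 1 t a = 4*a*x * (x - lower_edge t a) * (x - upper_edge t a)"
proof -
  have "(8*a+t) powr (3/2) = sqrt (8*a+t) ^ 3" using assms by (simp add: powr_three_halves)
  then have "(sqrt t * (8*a+t) powr (3/2))^2 = sqrt t ^ 2 * (sqrt (8*a+t) ^ 2) ^ 3"
    by algebra
  also have "\<dots> = t * (8*a + t)^3" using assms by simp
  finally have "(sqrt t * (8*a+t) powr (3/2))^2 = t * (8*a + t)^3" .
  from S_1_factorization[OF _ this] assms(1) show ?thesis
    unfolding lower_edge_def upper_edge_def by simp
qed

lemma lower_edge_less_upper_edge: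
  assumes "a > 0" and "t > 0"
  shows "lower_edge t a < upper_edge t a"
  using assms unfolding lower_edge_def upper_edge_def by (simp add: divide_strict_right_mono)

lemma edge_numerators:
  fixes a t s u :: real
  assumes "s^2 = t" and "u^2 = 8*a + t"
  shows "(u - 3*s)^3 * (u + s) = 8 * (8*a^2 + 20*a*t - t^2 - s*u^3)"
    and "(u + 3*s)^3 * (u - s) = 8 * (8*a^2 + 20*a*t - t^2 + s*u^3)"
proof -
  have a: "a = (u^2 - s^2) / 8" and t: "t = s^2" using assms by simp_all
  show "(u - 3*s)^3 * (u + s) = 8 * (8*a^2 + 20*a*t - t^2 - s*u^3)"
    and "(u + 3*s)^3 * (u - s) = 8 * (8*a^2 + 20*a*t - t^2 + s*u^3)"
    unfolding a t by (simp_all add: field_simps power2_eq_square power3_eq_cube)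
qed

lemma edges_factored:
  assumes "a > 0" and "t \<ge> 0"
  shows "lower_edge t a = (sqrt (8*a+t) - 3 * sqrt t)^3 * (sqrt (8*a+t) + sqrt t) / (64*a)"
    and "upper_edge t a = (sqrt (8*a+t) + 3 * sqrt t)^3 * (sqrt (8*a+t) - sqrt t) / (64*a)"
proof -
  have "sqrt t ^ 2 = t" "sqrt (8*a+t) ^ 2 = 8*a + t" using assms by simp_all
  note numerators = edge_numerators[OF this]
  show "lower_edge t a = (sqrt (8*a+t) - 3 * sqrt t)^3 * (sqrt (8*a+t) + sqrt t) / (64*a)"
    using assms unfolding lower_edge_def numerators(1) by (simp add: powr_three_halves field_simps)
  show "upper_edge t a = (sqrt (8*a+t) + 3 * sqrt t)^3 * (sqrt (8*a+t) - sqrt t) / (64*a)"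
    using assms unfolding upper_edge_def numerators(2) by (simp add: powr_three_halves field_simps)
qed

lemma upper_edge_pos:
  assumes "a > 0" and "t \<ge> 0"
  shows "upper_edge t a > 0"
proof -
  have "sqrt t < sqrt (8*a+t)" using assms by simp
  moreover have "sqrt (8*a+t) + 3 * sqrt t > 0" using assms by (simp add: add_pos_nonneg)
  ultimately show ?thesis
    using assms unfolding edges_factored(2)[OF assms] by (simp add: zero_less_mult_iff)
qed

lemma lower_edge_pos_iff:
  assumes "a > 0" and "t \<ge> 0"
  shows "lower_edge t a > 0 \<longleftrightarrow> t < a"
proof -
  have "3 * sqrt t = sqrt (9*t)" by (simp add: real_sqrt_mult)
  then have "(sqrt (8*a+t) - 3 * sqrt t) ^ 3 > 0 \<longleftrightarrow> t < a" by simp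
  moreover have "(sqrt (8*a+t) + sqrt t) / (64*a) > 0" using assms by (simp add: add_pos_nonneg)
  ultimately show ?thesis
    unfolding edges_factored(1)[OF assms] times_divide_eq_right[symmetric]
    by (simp only: zero_less_mult_iff) (meson not_less_iff_gr_or_eq)
qed

theorem lemma2p5:
  fixes a t :: real
  assumes "a > 0" and "t > 0"
  shows "(t < a \<longrightarrow>
            xL 1 t a = (8*a^2 + 20*a*t - t^2 - sqrt t * (8*a+t) powr (3/2)) / (8*a)
          \<and> xR 1 t a = (8*a^2 + 20*a*t - t^2 + sqrt t * (8*a+t) powr (3/2)) / (8*a)
          \<and> 0 < xL 1 t a \<and> xL 1 t a < xR 1 t a)
       \<and> (a \<le> t \<longrightarrow>
            xL 1 t a = 0
          \<and> xR 1 t a = (8*a^2 + 20*a*t - t^2 + sqrt t * (8*a+t) powr (3/2)) / (8*a)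
          \<and> xR 1 t a > 0)"
proof -
  let ?L = "lower_edge t a" and ?U = "upper_edge t a"
  have a: "a \<noteq> 0" and t: "t \<ge> 0" using assms by simp_all
  have factor: "S x 1 t a = 4*a*x * (x - ?L) * (x - ?U)" for x
    using S_1_factorization_edges[OF assms(1) t] .
  have "?L < ?U" and "?U > 0"
    using lower_edge_less_upper_edge upper_edge_pos assms by simp_all
  show ?thesis
  proof (intro conjI impI)
    assume "t < a"
    then have "0 < ?L" using lower_edge_pos_iff[OF assms(1) t] by simp
    with xL_xR_of_factorization[OF a _ _, of 0 ?L ?U] factor \<open>?L < ?U\<close>
    show "xL 1 t a = (8*a^2 + 20*a*t - t^2 - sqrt t * (8*a+t) powr (3/2)) / (8*a)"
      and "xR 1 t a = (8*a^2 + 20*a*t - t^2 + sqrt t * (8*a+t) powr (3/2)) / (8*a)"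
      and "0 < xL 1 t a" and "xL 1 t a < xR 1 t a"
      by (auto simp: lower_edge_def upper_edge_def ac_simps)
  next
    assume "a \<le> t"
    then have "?L \<le> 0" using lower_edge_pos_iff[OF assms(1) t] by simp
    with xL_xR_of_factorization[OF a _ _, of ?L 0 ?U] factor \<open>?U > 0\<close>
    show "xL 1 t a = 0"
      and "xR 1 t a = (8*a^2 + 20*a*t - t^2 + sqrt t * (8*a+t) powr (3/2)) / (8*a)"
      and "xR 1 t a > 0"
      by (auto simp: upper_edge_def ac_simps)
  qed
qed

end
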